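(* Let $a>0$ be constant and consider $\partial_t u+\partial_x(au)=0$ on a periodic 1D mesh. Let $n\ge1$ and $-1=\tau_0<\tau_1<\dots<\tau_n=1$. Consider the Spectral Difference (SD) scheme (context) with flux points $\tau_0,\dots,\tau_n$ and solution points $\sigma_j=\tau_j$ for $j=1,\dots,n$ (the flux points excluding the left endpoint), with the upwind numerical flux. Consider also the FUSE scheme of degree $p=n$ with nodes $r_i=\tau_i$, $i=0,\dots,n$ (context). Then, under the identification $v_{j,k}=u_{j,k}$ for $j=1,\dots,n$ and all elements $k$ (which is a bijection between the unknowns of the two schemes, since $u_{0,k}=u_{n,k-1}$ in FUSE), the two semi-discrete systems of ODEs are identical.
   Context: Mesh: $0=x_0<\dots<x_N=1$, periodic, elements $K_k=[x_{k-1},x_k]$ (indices mod $N$), affine maps $\chi_k(r)=x_{k-1}+\tfrac{r+1}{2}(x_k-x_{k-1})$ from $[-1,1]$ to $K_k$. SD scheme: in each element $K_k$ there are $n$ solution points $\chi_k(\sigma_1),\dots,\chi_k(\sigma_n)$ carrying unknowns $v_{1,k},\dots,v_{n,k}$ (not shared between elements), and $n+1$ flux points $\chi_k(\tau_0),\dots,\chi_k(\tau_n)$ with $\tau_0=-1,\tau_n=1$ (so flux points at element endpoints are repeated in neighbouring elements). Let $v_h^{(k)}$ be the polynomial of degree $\le n-1$ on $K_k$ interpolating $v_{j,k}$ at the solution points. Flux values: at interior flux points ($0<m<n$) the flux is $a\,v_h^{(k)}(\chi_k(\tau_m))$; at element endpoints the upwind numerical flux is used, i.e. at $x_{k-1}$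 (point $\tau_0$ of $K_k$) the value $a\,v_h^{(k-1)}(x_{k-1})$ and at $x_k$ (point $\tau_n$ of $K_k$) the value $a\,v_h^{(k)}(x_k)$. Let $G^{(k)}$ be the polynomial of degree $\le n$ interpolating these $n+1$ flux values at the flux points; the SD update is $\frac{d}{dt}v_{j,k}=-(G^{(k)})'(\chi_k(\sigma_j))$. FUSE scheme of degree $p$ with nodes $-1=r_0<\dots<r_p=1$: nodes $s_{i,k}=\chi_k(r_i)$ with boundary nodes shared ($s_{p,k}=s_{0,k+1}$, single value, so $u_{0,k}=u_{p,k-1}$); $F_h^{(k)}$ is the polynomial of degree $\le p$ interpolating $a\,u_{i,k}$ at $s_{i,k}$, $i=0,\dots,p$; update $\frac{d}{dt}u_{i,k}=-(F_h^{(k)})'(s_{i,k})$ for $1\le i\le p-1$, and at the shared node $s_{p,k}=s_{0,k+1}$ the upwind element is used: since $a>0$, $\frac{d}{dt}u_{p,k}=-(F_h^{(k)})'(s_{p,k})$. *)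

theory Defs
  imports "HOL-Computational_Algebra.Polynomial"
begin

definition interp :: "nat \<Rightarrow> nat set \<Rightarrow> (nat \<Rightarrow> real) \<Rightarrow> (nat \<Rightarrow> real) \<Rightarrow> real poly" where
  "interp d I X Y = (THE p. degree p \<le> d \<and> (\<forall>i\<in>I. poly p (X i) = Y i))"

text \<open>Periodic mesh 0 = x 0 < ... < x N = 1, elements K_k = [x (k-1), x k], k = 1..N.\<close>
definition chi :: "(nat \<Rightarrow> real) \<Rightarrow> nat \<Rightarrow> real \<Rightarrow> real" where
  "chi x k r = x (k - 1) + (r + 1) / 2 * (x k - x (k - 1))"

definition prev_elem :: "nat \<Rightarrow> nat \<Rightarrow> nat" where
  "prev_elem N k = (if k = 1 then N else k - 1)"

text \<open>SD: solution points sigma j = tau j (j=1..n), flux points tau 0..tau n;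
  v j k is the unknown at solution point j of element k.\<close>
definition sd_sol_poly :: "(nat \<Rightarrow> real) \<Rightarrow> nat \<Rightarrow> (nat \<Rightarrow> real) \<Rightarrow> (nat \<Rightarrow> nat \<Rightarrow> real) \<Rightarrow> nat \<Rightarrow> real poly" where
  "sd_sol_poly x n tau v k = interp (n - 1) {1..n} (\<lambda>j. chi x k (tau j)) (\<lambda>j. v j k)"

definition sd_flux_val :: "real \<Rightarrow> (nat \<Rightarrow> real) \<Rightarrow> nat \<Rightarrow> nat \<Rightarrow> (nat \<Rightarrow> real) \<Rightarrow> (nat \<Rightarrow> nat \<Rightarrow> real) \<Rightarrow> nat \<Rightarrow> nat \<Rightarrow> real" where
  "sd_flux_val a x N n tau v k m =
     (if m = 0 then a * poly (sd_sol_poly x n tau v (prev_elem N k)) (chi x (prev_elem N k) 1)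
      else a * poly (sd_sol_poly x n tau v k) (chi x k (tau m)))"

definition sd_flux_poly :: "real \<Rightarrow> (nat \<Rightarrow> real) \<Rightarrow> nat \<Rightarrow> nat \<Rightarrow> (nat \<Rightarrow> real) \<Rightarrow> (nat \<Rightarrow> nat \<Rightarrow> real) \<Rightarrow> nat \<Rightarrow> real poly" where
  "sd_flux_poly a x N n tau v k = interp n {0..n} (\<lambda>m. chi x k (tau m)) (sd_flux_val a x N n tau v k)"

definition sd_rhs :: "real \<Rightarrow> (nat \<Rightarrow> real) \<Rightarrow> nat \<Rightarrow> nat \<Rightarrow> (nat \<Rightarrow> real) \<Rightarrow> (nat \<Rightarrow> nat \<Rightarrow> real) \<Rightarrow> nat \<Rightarrow> nat \<Rightarrow> real" where
  "sd_rhs a x N n tau v j k = - poly (pderiv (sd_flux_poly a x N n tau v k)) (chi x k (tau j))"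

text \<open>FUSE of degree p with nodes r 0..r p; u i k is the unknown at node s_{i,k} = chi x k (r i).\<close>
definition fuse_flux_poly :: "real \<Rightarrow> (nat \<Rightarrow> real) \<Rightarrow> nat \<Rightarrow> (nat \<Rightarrow> real) \<Rightarrow> (nat \<Rightarrow> nat \<Rightarrow> real) \<Rightarrow> nat \<Rightarrow> real poly" where
  "fuse_flux_poly a x p r u k = interp p {0..p} (\<lambda>i. chi x k (r i)) (\<lambda>i. a * u i k)"

text \<open>Right-hand side d/dt u_{i,k} of FUSE for i = 1..p (i = p being the shared node, upwind element k since a > 0).\<close>
definition fuse_rhs :: "real \<Rightarrow> (nat \<Rightarrow> real) \<Rightarrow> nat \<Rightarrow> (nat \<Rightarrow> real) \<Rightarrow> (nat \<Rightarrow> nat \<Rightarrow> real) \<Rightarrow> nat \<Rightarrow> nat \<Rightarrow> real" where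
  "fuse_rhs a x p r u i k = - poly (pderiv (fuse_flux_poly a x p r u k)) (chi x k (r i))"

end

theory Submission
  imports Defs
begin

text \<open>Choosing the SD solution points as the flux points \<open>\<tau>\<^sub>1, \<dots>, \<tau>\<^sub>n\<close> makes the
  SD solution polynomial reproduce the unknowns at the interior flux points and, through
  \<open>\<tau>\<^sub>n = 1\<close>, at the right end of the upwind neighbour. Hence the SD flux data at the
  \<open>n + 1\<close> flux points are exactly \<open>a u\<^sub>i\<^sub>,\<^sub>k\<close>, so the SD flux polynomial is the FUSE flux
  polynomial and the two right-hand sides, both its derivative at the same nodes, agree.\<close>

lemma interpolating_poly_exists:
  fixes X Y :: "'i \<Rightarrow> 'a::field"
  assumes "finite I" "inj_on X I"
  shows "\<exists>p. degree p \<le> card I - 1 \<and> (\<forall>i\<in>I. poly p (X i) = Y i)"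
  using assms
proof (induction I rule: finite_induct)
  case empty
  show ?case by (rule exI[of _ 0]) simp
next
  case (insert i I)
  then obtain q where q: "degree q \<le> card I - 1" "\<forall>j\<in>I. poly q (X j) = Y j"
    by auto
  define w where "w = (\<Prod>j\<in>I. [:- X j, 1:])"
  have deg_w: "degree w \<le> card I"
    unfolding w_def using degree_prod_sum_le[OF insert(1), of "\<lambda>j. [:- X j, 1:]"] by simp
  have w_vanishes: "poly w (X j) = 0" if "j \<in> I" for j
    unfolding w_def poly_prod using that insert(1) by (auto intro: prod_zero)
  have w_nonzero: "poly w (X i) \<noteq> 0"
    unfolding w_def poly_prod using insert by (auto simp: prod_zero_iff)
  define p where "p = q + smult ((Y i - poly q (X i)) / poly w (X i)) w"
  have "degree p \<le> card (insert i I) - 1"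
    using insert q(1) deg_w degree_add_le[of q _ "smult _ w"] degree_smult_le[of _ w]
    by (fastforce simp: p_def)
  moreover have "\<forall>j\<in>insert i I. poly p (X j) = Y j"
    using q(2) w_vanishes w_nonzero by (auto simp: p_def)
  ultimately show ?case by blast
qed

lemma interpolating_poly_unique:
  fixes p q :: "'a::idom poly"
  assumes "inj_on X I" "card I = Suc d" "degree p \<le> d" "degree q \<le> d"
    and "\<forall>i\<in>I. poly p (X i) = poly q (X i)"
  shows "p = q"
proof (rule poly_eqI_degree[where A = "X ` I"])
  have "card (X ` I) = Suc d"
    using card_image[OF assms(1)] assms(2) by simp
  then show "degree p < card (X ` I)" "degree q < card (X ` I)"
    using assms(3,4) by auto
qed (use assms(5) in auto)

lemma poly_interp:
  assumes "inj_on X I" "card I = Suc d" "i \<in> I"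
  shows "poly (interp d I X Y) (X i) = Y i"
proof -
  have "finite I" using assms(2) card.infinite by fastforce
  then obtain p where p: "degree p \<le> d" "\<forall>i\<in>I. poly p (X i) = Y i"
    using interpolating_poly_exists[OF _ assms(1), of Y] assms(2) by auto
  have "\<exists>!p. degree p \<le> d \<and> (\<forall>i\<in>I. poly p (X i) = Y i)"
    using p interpolating_poly_unique[OF assms(1,2)] by (intro ex1I[of _ p]) auto
  from theI'[OF this] show ?thesis
    unfolding interp_def using assms(3) by blast
qed

lemma interp_cong:
  assumes "\<And>i. i \<in> I \<Longrightarrow> Y i = Z i"
  shows "interp d I X Y = interp d I X Z"
  unfolding interp_def using assms by simp

lemma strict_mono_on_atLeastAtMost_if_Suc_less:
  fixes f :: "nat \<Rightarrow> 'a::order"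
  assumes "\<And>i. i < n \<Longrightarrow> f i < f (Suc i)"
  shows "strict_mono_on {0..n} f"
  by (rule strict_mono_onI, rule lift_Suc_mono_less_ivl[where N = "{..<n}"])
     (use assms in auto)

lemma inj_chi:
  assumes "x (k - 1) \<noteq> x k"
  shows "inj (chi x k)"
proof (rule injI)
  fix r s assume "chi x k r = chi x k s"
  then have "(r - s) * (x k - x (k - 1)) = 0"
    unfolding chi_def by (simp add: field_simps)
  with assms show "r = s" by simp
qed

lemma sd_sol_poly_at_solution_point:
  assumes "inj_on (\<lambda>j. chi x k (tau j)) {1..n}" "j \<in> {1..n}"
  shows "poly (sd_sol_poly x n tau v k) (chi x k (tau j)) = v j k"
  unfolding sd_sol_poly_def
  by (rule poly_interp[where X = "\<lambda>j. chi x k (tau j)", OF assms(1) _ assms(2)])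
     (use assms(2) in simp)

lemma sd_flux_poly_eq_fuse_flux_poly:
  assumes inj_k: "inj_on (\<lambda>j. chi x k (tau j)) {1..n}"
    and inj_prev: "inj_on (\<lambda>j. chi x (prev_elem N k) (tau j)) {1..n}"
    and "n \<ge> 1" "tau n = 1"
    and "u 0 k = u n (prev_elem N k)" "v n (prev_elem N k) = u n (prev_elem N k)"
    and "\<And>j. j \<in> {1..n} \<Longrightarrow> v j k = u j k"
  shows "sd_flux_poly a x N n tau v k = fuse_flux_poly a x n tau u k"
  unfolding sd_flux_poly_def fuse_flux_poly_def
proof (rule interp_cong)
  fix m assume "m \<in> {0..n}"
  then show "sd_flux_val a x N n tau v k m = a * u m k"
    using assms sd_sol_poly_at_solution_point[OF inj_k, of m v]
      sd_sol_poly_at_solution_point[OF inj_prev, of n v]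
    by (auto simp: sd_flux_val_def)
qed

theorem mainTheorem3:
  fixes a :: real and x :: "nat \<Rightarrow> real" and N n :: nat and tau :: "nat \<Rightarrow> real"
    and u v :: "nat \<Rightarrow> nat \<Rightarrow> real"
  assumes "a > 0"
    and "N \<ge> 1" and "x 0 = 0" and "x N = 1" and "\<And>k. k < N \<Longrightarrow> x k < x (Suc k)"
    and "n \<ge> 1" and "tau 0 = -1" and "tau n = 1" and "\<And>i. i < n \<Longrightarrow> tau i < tau (Suc i)"
    and shared: "\<And>k. k \<in> {1..N} \<Longrightarrow> u 0 k = u n (prev_elem N k)"
    and ident: "\<And>j k. j \<in> {1..n} \<Longrightarrow> k \<in> {1..N} \<Longrightarrow> v j k = u j k"
  shows "\<forall>k\<in>{1..N}. \<forall>j\<in>{1..n}. sd_rhs a x N n tau v j k = fuse_rhs a x n tau u j k"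
proof (intro ballI)
  have inj_tau: "inj_on tau {0..n}"
    using strict_mono_on_imp_inj_on strict_mono_on_atLeastAtMost_if_Suc_less assms(9) by blast
  have inj_nodes: "inj_on (\<lambda>j. chi x k (tau j)) {1..n}" if "k \<in> {1..N}" for k
  proof -
    have "x (k - 1) < x k"
      using assms(5)[of "k - 1"] that by auto
    then have "inj (chi x k)"
      by (intro inj_chi) simp
    then show ?thesis
      using comp_inj_on[of tau "{1..n}" "chi x k"] inj_on_subset[OF inj_tau]
      by (auto simp: inj_on_subset o_def)
  qed
  fix k j assume k: "k \<in> {1..N}" and "j \<in> {1..n}"
  have prev: "prev_elem N k \<in> {1..N}"
    using k assms(2) by (auto simp: prev_elem_def)
  have "sd_flux_poly a x N n tau v k = fuse_flux_poly a x n tau u k"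
    using sd_flux_poly_eq_fuse_flux_poly[OF inj_nodes[OF k] inj_nodes[OF prev]]
      assms(6,8) shared[OF k] ident[OF _ prev] ident[OF _ k] by simp
  then show "sd_rhs a x N n tau v j k = fuse_rhs a x n tau u j k"
    by (simp add: sd_rhs_def fuse_rhs_def)
qed

end
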